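(* Consider the analog decentralized learning protocol described in the context, with arbitrary step sizes $\eta^{(t)}>0$, $\zeta^{(t)}\ge 0$ and arbitrary transmit powers $P^{(t)}>0$. Then for every iteration $t\ge 0$ and every device $i\in\mathcal{V}$, the analog consensus update $$\boldsymbol\theta_i^{(t+1)}=\boldsymbol\theta_i^{(t+1/2)}+\zeta^{(t)}\big(w_{ii}\hat{\boldsymbol\theta}_i^{(t+1)}+\hat{\boldsymbol y}_i^{(t+1)}-\hat{\boldsymbol\theta}_i^{(t+1)}\big)$$ is equivalent to $$\boldsymbol\theta_i^{(t+1)}=\boldsymbol\theta_i^{(t+1/2)}+\zeta^{(t)}\sum_{j\in\mathcal{N}_i\cup\{i\}}w_{ij}\big(\hat{\boldsymbol\theta}_j^{(t+1)}-\hat{\boldsymbol\theta}_i^{(t+1)}\big)+\zeta^{(t)}\sum_{\tau=0}^{t}\frac{m}{d}(\boldsymbol A^{(\tau)})^T\tilde{\boldsymbol n}_i^{(\tau)},$$ where $\tilde{\boldsymbol n}_i^{(\tau)}\in\mathbb{R}^{m}$ is an effective noise vector which (conditionally on the fading coefficients and on the vectors $\boldsymbol u_j^{(\tau)}$) is distributed as $\mathcal{N}(\boldsymbol 0,\tilde N_{0i}^{(\tau)}\boldsymbol I)$ with $$\tilde N_{0i}^{(t)}=\frac{1}{2}\frac{N_0}{NP^{(t)}}\Bigg(\sum_{s\in\mathcal{S}_i^{\rm AR}}\max_{j\in\mathcal{N}_i^{(s)}}\Big\{|\mathcal{S}_j^{\rm Tx}|\,w_{ij}^2\frac{\|\boldsymbol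 u_j^{(t)}\|^2}{|h_{ij}^{\prime(t)}|^2}\Big\}+\sum_{s\in\mathcal{S}_i^{\rm BR}}|\mathcal{S}_{j_s}^{\rm Tx}|\,w_{ij_s}^2\frac{\|\boldsymbol u_{j_s}^{(t)}\|^2}{|h_{ij_s}^{\prime(t)}|^2}\Bigg),$$ with $\boldsymbol u_j^{(t)}=\boldsymbol\theta_j^{(t+1/2)}-\hat{\boldsymbol\theta}_j^{(t)}$ and $j_s$ the (unique) neighbor of $i$ broadcasting to $i$ in slot $s\in\mathcal{S}_i^{\rm BR}$.
   Context: Setting. $K$ devices $\mathcal{V}=\{1,\dots,K\}$ form a connected undirected graph $\mathcal{G}(\mathcal{V},\mathcal{E})$; $\mathcal{N}_i$ is the neighbor set of $i$. $\boldsymbol W=\boldsymbol W^T\in\mathbb{R}^{K\times K}$ is a doubly stochastic mixing matrix with entries $w_{ij}\ge 0$, $w_{ij}=0$ if $j\notin\mathcal{N}_i\cup\{i\}$, and $\|\boldsymbol W-\boldsymbol 1\boldsymbol 1^T/K\|_2<1$. Each device $i$ has a local function $f_i:\mathbb{R}^d\to\mathbb{R}$ and a stochastic (mini-batch) gradient $\hat\nabla f_i$. Compression (random linear coding). Let $m\le d$ and $\boldsymbol H\in\{\pm1\}^{m\times d}$ with $\frac1d\boldsymbol H\boldsymbol H^T=\boldsymbol I$. For each iteration $t$, $\boldsymbol A^{(t)}=\frac{1}{\sqrt m}\boldsymbol H\boldsymbol R^{(t)}$ where $\boldsymbol R^{(t)}$ is diagonal with i.i.d. entries uniform on $\{\pm1\}$,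 shared by all devices. Channels. For $(i,j)\in\mathcal{E}$, $h_{ij}^{\prime(t)}\in\mathbb{C}\setminus\{0\}$ is the channel coefficient between $i$ and $j$ in iteration $t$ (constant within the iteration). Each iteration uses a communication block of $N$ channel uses split into $M=2n$ slots of $m=N/M$ channel uses each; each device has energy budget $NP^{(t)}$ per block. Received noise vectors $\boldsymbol n_j^{(t,s)}\sim\mathcal{CN}(\boldsymbol 0,N_0\boldsymbol I_m)$ are i.i.d. over devices, slots and iterations, independent of everything else. Schedule. Each device $i$ has disjoint sets of odd slots $\mathcal{S}_i^{\rm AT}$ (transmit in AirComp mode), $\mathcal{S}_i^{\rm AR}$ (receive in AirComp mode, as a center node), and even slots $\mathcal{S}_i^{\rm BT}$ (broadcast), $\mathcal{S}_i^{\rm BR}$ (receive a broadcast); $\mathcal{S}_i^{\rm Tx}=\mathcal{S}_i^{\rm AT}\cup\mathcal{S}_i^{\rm BT}$. For $s\in\mathcal{S}_j^{\rm AR}$, $\mathcal{N}_j^{(s)}\subseteq\mathcal{N}_j$ is the set of neighbors of $j$ transmitting to $j$ in AirComp mode in slot $s$; for $s\in\mathcal{S}_j^{\rm BR}$ there is exactly one neighbor $i_s\in\mathcal{N}_j$ broadcasting to $j$ in slot $s$. For each $j$, the sets $\mathcal{N}_j^{(s)}$ ($s\in\mathcal{S}_j^{\rm AR}$) and the singletons $\{i_s\}$ ($s\in\mathcal{S}_j^{\rm BR}$) partition $\mathcal{N}_j$. Protocol. Initialize $\boldsymbol\theta_i^{(0)}$ arbitrary, $\hat{\boldsymbol\theta}_i^{(0)}=\boldsymbol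 0$, $\hat{\boldsymbol y}_i^{(0)}=\boldsymbol 0$. At iteration $t$: (1) $\boldsymbol\theta_i^{(t+1/2)}=\boldsymbol\theta_i^{(t)}-\eta^{(t)}\hat\nabla f_i(\boldsymbol\theta_i^{(t)})$ and $\boldsymbol u_i^{(t)}=\boldsymbol\theta_i^{(t+1/2)}-\hat{\boldsymbol\theta}_i^{(t)}$. (2) Odd slot $s\in\mathcal{S}_j^{\rm AR}$: each $i\in\mathcal{N}_j^{(s)}$ sends $\boldsymbol x_{ij}^{(t,s)}=\frac{\sqrt{\gamma_j^{(t,s)}}}{h_{ij}^{\prime(t)}}w_{ji}\boldsymbol A^{(t)}\boldsymbol u_i^{(t)}$, $j$ receives $\boldsymbol y_j^{(t,s)}=\sqrt{\gamma_j^{(t,s)}}\sum_{i\in\mathcal{N}_j^{(s)}}w_{ji}\boldsymbol A^{(t)}\boldsymbol u_i^{(t)}+\boldsymbol n_j^{(t,s)}$ and forms $\hat{\boldsymbol y}_j^{(t,s)}=\frac md(\boldsymbol A^{(t)})^T\Re\{\boldsymbol y_j^{(t,s)}/\sqrt{\gamma_j^{(t,s)}}\}$. (3) Even slot $s\in\mathcal{S}_i^{\rm BT}$: $i$ sends $\boldsymbol x_i^{(t,s)}=\sqrt{\alpha_i^{(t,s)}}\boldsymbol A^{(t)}\boldsymbol u_i^{(t)}$; each receiving neighbor $j$ gets $\boldsymbol y_{ij}^{(t,s)}=\sqrt{\alpha_i^{(t,s)}}h_{ij}^{\prime(t)}\boldsymbol A^{(t)}\boldsymbol u_i^{(t)}+\boldsymbol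 n_j^{(t,s)}$ and forms $\hat{\boldsymbol y}_{ij}^{(t,s)}=w_{ji}\frac md(\boldsymbol A^{(t)})^T\Re\{\boldsymbol y_{ij}^{(t,s)}/(\sqrt{\alpha_i^{(t,s)}}h_{ij}^{\prime(t)})\}$. (4) $\hat{\boldsymbol y}_j^{(t+1)}=\hat{\boldsymbol y}_j^{(t)}+\sum_{s\in\mathcal{S}_j^{\rm AR}}\hat{\boldsymbol y}_j^{(t,s)}+\sum_{s\in\mathcal{S}_j^{\rm BR}}\hat{\boldsymbol y}_{i_sj}^{(t,s)}$, $\hat{\boldsymbol\theta}_j^{(t+1)}=\hat{\boldsymbol\theta}_j^{(t)}+\frac md(\boldsymbol A^{(t)})^T\boldsymbol A^{(t)}\boldsymbol u_j^{(t)}$, and $\boldsymbol\theta_j^{(t+1)}=\boldsymbol\theta_j^{(t+1/2)}+\zeta^{(t)}(w_{jj}\hat{\boldsymbol\theta}_j^{(t+1)}+\hat{\boldsymbol y}_j^{(t+1)}-\hat{\boldsymbol\theta}_j^{(t+1)})$. Power scaling (equal power per transmit slot, with the constraints $\mathbb{E}_{\boldsymbol A}\|\boldsymbol x\|^2\le NP^{(t)}/|\mathcal{S}_i^{\rm Tx}|$ met with the largest feasible factors): $\gamma_j^{(t,s)}=\min_{i\in\mathcal{N}_j^{(s)}}\frac{NP^{(t)}|h_{ij}^{\prime(t)}|^2}{|\mathcal{S}_i^{\rm Tx}|w_{ji}^2\|\boldsymbol u_i^{(t)}\|^2}$ and $\alpha_i^{(t,s)}=\frac{NP^{(t)}}{|\mathcal{S}_i^{\rm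 Tx}|\|\boldsymbol u_i^{(t)}\|^2}$ (assumed well defined). *)

theory Defs
  imports "HOL-Analysis.Analysis" "HOL-Probability.Probability"
begin

text \<open>
  'v : device index type (K = CARD('v) devices), 'd : model dimension index (d = CARD('d)),
  'm : code length index (m = CARD('m)).  Slots are natural numbers 1..M with M = 2*nh.
  Convention: W i j = w_ij ; hc t i j = channel coefficient h'_ij in iteration t
  (i = transmitter, j = receiver in the protocol formulas); noise t s j = n_j^(t,s).
\<close>

record ('v, 'd, 'm) lsys =
  Wt    :: "'v \<Rightarrow> 'v \<Rightarrow> real"
  Nb    :: "'v \<Rightarrow> 'v set"
  Hm    :: "real^'d^'m"
  Rd    :: "nat \<Rightarrow> real^'d"
  hc    :: "nat \<Rightarrow> 'v \<Rightarrow> 'v \<Rightarrow> complex"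
  nh    :: nat
  SAT   :: "'v \<Rightarrow> nat set"
  SAR   :: "'v \<Rightarrow> nat set"
  SBT   :: "'v \<Rightarrow> nat set"
  SBR   :: "'v \<Rightarrow> nat set"
  NA    :: "'v \<Rightarrow> nat \<Rightarrow> 'v set"
  src   :: "'v \<Rightarrow> nat \<Rightarrow> 'v"
  Pw    :: "nat \<Rightarrow> real"
  N0    :: real
  eta   :: "nat \<Rightarrow> real"
  zeta  :: "nat \<Rightarrow> real"
  grad  :: "nat \<Rightarrow> 'v \<Rightarrow> real^'d \<Rightarrow> real^'d"
  theta0 :: "'v \<Rightarrow> real^'d"
  noise :: "nat \<Rightarrow> nat \<Rightarrow> 'v \<Rightarrow> complex^'m"

definition dd :: "('v,'d::finite,'m::finite) lsys \<Rightarrow> real" where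
  "dd S = real CARD('d)"

definition mm :: "('v,'d::finite,'m::finite) lsys \<Rightarrow> real" where
  "mm S = real CARD('m)"

definition Mslots :: "('v,'d::finite,'m::finite) lsys \<Rightarrow> nat" where
  "Mslots S = 2 * nh S"

definition Nuse :: "('v,'d::finite,'m::finite) lsys \<Rightarrow> real" where
  "Nuse S = real (Mslots S) * real CARD('m)"

definition Tx :: "('v,'d::finite,'m::finite) lsys \<Rightarrow> 'v \<Rightarrow> nat set" where
  "Tx S i = SAT S i \<union> SBT S i"

definition diagm :: "real^'n \<Rightarrow> real^'n^'n" where
  "diagm r = (\<chi> i j. if i = j then r $ i else 0)"

definition Amat :: "('v,'d::finite,'m::finite) lsys \<Rightarrow> nat \<Rightarrow> real^'d^'m" where
  "Amat S t = (1 / sqrt (mm S)) *\<^sub>R (Hm S ** diagm (Rd S t))"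

definition cvec :: "real^'n \<Rightarrow> complex^'n" where
  "cvec x = (\<chi> k. complex_of_real (x $ k))"

definition Re_vec :: "complex^'n \<Rightarrow> real^'n" where
  "Re_vec z = (\<chi> k. Re (z $ k))"

definition decomp :: "('v,'d::finite,'m::finite) lsys \<Rightarrow> nat \<Rightarrow> real^'m \<Rightarrow> real^'d" where
  "decomp S t x = (mm S / dd S) *\<^sub>R (transpose (Amat S t) *v x)"

definition gam :: "('v,'d::finite,'m::finite) lsys \<Rightarrow> nat \<Rightarrow> ('v \<Rightarrow> real^'d) \<Rightarrow> 'v \<Rightarrow> nat \<Rightarrow> real" where
  "gam S t u j s = Min ((\<lambda>i. Nuse S * Pw S t * (cmod (hc S t i j))\<^sup>2 /
        (real (card (Tx S i)) * (Wt S j i)\<^sup>2 * (norm (u i))\<^sup>2)) ` NA S j s)"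

definition alp :: "('v,'d::finite,'m::finite) lsys \<Rightarrow> nat \<Rightarrow> ('v \<Rightarrow> real^'d) \<Rightarrow> 'v \<Rightarrow> real" where
  "alp S t u i = Nuse S * Pw S t / (real (card (Tx S i)) * (norm (u i))\<^sup>2)"

definition thalf :: "('v,'d::finite,'m::finite) lsys \<Rightarrow> nat \<Rightarrow> ('v \<Rightarrow> real^'d) \<Rightarrow> 'v \<Rightarrow> real^'d" where
  "thalf S t th i = th i - eta S t *\<^sub>R grad S t i (th i)"

definition x_air :: "('v,'d::finite,'m::finite) lsys \<Rightarrow> nat \<Rightarrow> ('v \<Rightarrow> real^'d) \<Rightarrow> 'v \<Rightarrow> 'v \<Rightarrow> nat \<Rightarrow> complex^'m" where
  "x_air S t u i j s = (complex_of_real (sqrt (gam S t u j s)) / hc S t i j * complex_of_real (Wt S j i))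
        *s cvec (Amat S t *v u i)"

definition y_air :: "('v,'d::finite,'m::finite) lsys \<Rightarrow> nat \<Rightarrow> ('v \<Rightarrow> real^'d) \<Rightarrow> 'v \<Rightarrow> nat \<Rightarrow> complex^'m" where
  "y_air S t u j s = (\<Sum>i\<in>NA S j s. hc S t i j *s x_air S t u i j s) + noise S t s j"

definition yhat_air :: "('v,'d::finite,'m::finite) lsys \<Rightarrow> nat \<Rightarrow> ('v \<Rightarrow> real^'d) \<Rightarrow> 'v \<Rightarrow> nat \<Rightarrow> real^'d" where
  "yhat_air S t u j s = decomp S t (Re_vec (complex_of_real (1 / sqrt (gam S t u j s)) *s y_air S t u j s))"

definition x_bc :: "('v,'d::finite,'m::finite) lsys \<Rightarrow> nat \<Rightarrow> ('v \<Rightarrow> real^'d) \<Rightarrow> 'v \<Rightarrow> complex^'m" where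
  "x_bc S t u i = complex_of_real (sqrt (alp S t u i)) *s cvec (Amat S t *v u i)"

definition y_bc :: "('v,'d::finite,'m::finite) lsys \<Rightarrow> nat \<Rightarrow> ('v \<Rightarrow> real^'d) \<Rightarrow> 'v \<Rightarrow> 'v \<Rightarrow> nat \<Rightarrow> complex^'m" where
  "y_bc S t u i j s = hc S t i j *s x_bc S t u i + noise S t s j"

definition yhat_bc :: "('v,'d::finite,'m::finite) lsys \<Rightarrow> nat \<Rightarrow> ('v \<Rightarrow> real^'d) \<Rightarrow> 'v \<Rightarrow> 'v \<Rightarrow> nat \<Rightarrow> real^'d" where
  "yhat_bc S t u i j s = Wt S j i *\<^sub>R decomp S t
      (Re_vec ((1 / (complex_of_real (sqrt (alp S t u i)) * hc S t i j)) *s y_bc S t u i j s))"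

text \<open>State = (theta, theta_hat, y_hat).\<close>
type_synonym ('v,'d) lstate = "('v \<Rightarrow> real^'d) \<times> ('v \<Rightarrow> real^'d) \<times> ('v \<Rightarrow> real^'d)"

definition ustate :: "('v,'d::finite,'m::finite) lsys \<Rightarrow> nat \<Rightarrow> ('v,'d) lstate \<Rightarrow> 'v \<Rightarrow> real^'d" where
  "ustate S t st i = thalf S t (fst st) i - fst (snd st) i"

definition step :: "('v,'d::finite,'m::finite) lsys \<Rightarrow> nat \<Rightarrow> ('v,'d) lstate \<Rightarrow> ('v,'d) lstate" where
  "step S t st =
     (let u = ustate S t st;
          yh' = (\<lambda>j. snd (snd st) j + (\<Sum>s\<in>SAR S j. yhat_air S t u j s)
                                    + (\<Sum>s\<in>SBR S j. yhat_bc S t u (src S j s) j s));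
          th' = (\<lambda>j. fst (snd st) j + decomp S t (Amat S t *v u j))
      in (\<lambda>j. thalf S t (fst st) j + zeta S t *\<^sub>R (Wt S j j *\<^sub>R th' j + yh' j - th' j), th', yh'))"

primrec run :: "('v,'d::finite,'m::finite) lsys \<Rightarrow> nat \<Rightarrow> ('v,'d) lstate" where
  "run S 0 = (theta0 S, (\<lambda>_. 0), (\<lambda>_. 0))"
| "run S (Suc t) = step S t (run S t)"

definition theta :: "('v,'d::finite,'m::finite) lsys \<Rightarrow> nat \<Rightarrow> 'v \<Rightarrow> real^'d" where
  "theta S t = fst (run S t)"

definition theta_hat :: "('v,'d::finite,'m::finite) lsys \<Rightarrow> nat \<Rightarrow> 'v \<Rightarrow> real^'d" where
  "theta_hat S t = fst (snd (run S t))"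

definition theta_half :: "('v,'d::finite,'m::finite) lsys \<Rightarrow> nat \<Rightarrow> 'v \<Rightarrow> real^'d" where
  "theta_half S t = thalf S t (theta S t)"

definition uvec :: "('v,'d::finite,'m::finite) lsys \<Rightarrow> nat \<Rightarrow> 'v \<Rightarrow> real^'d" where
  "uvec S t = ustate S t (run S t)"

text \<open>Effective noise at device i in iteration t, as a function of the vectors u_j^(t)
  and of the noise vectors z s = n_i^(t,s) received by i in the slots of iteration t.\<close>
definition eff_noise :: "('v,'d::finite,'m::finite) lsys \<Rightarrow> nat \<Rightarrow> ('v \<Rightarrow> real^'d) \<Rightarrow> 'v
      \<Rightarrow> (nat \<Rightarrow> complex^'m) \<Rightarrow> real^'m" where
  "eff_noise S t u i z =
     (\<Sum>s\<in>SAR S i. Re_vec (complex_of_real (1 / sqrt (gam S t u i s)) *s z s))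
   + (\<Sum>s\<in>SBR S i. Wt S i (src S i s) *\<^sub>R
        Re_vec ((1 / (complex_of_real (sqrt (alp S t u (src S i s))) * hc S t (src S i s) i)) *s z s))"

definition Ntil :: "('v,'d::finite,'m::finite) lsys \<Rightarrow> nat \<Rightarrow> ('v \<Rightarrow> real^'d) \<Rightarrow> 'v \<Rightarrow> real" where
  "Ntil S t u i = 1/2 * N0 S / (Nuse S * Pw S t) *
     ((\<Sum>s\<in>SAR S i. Max ((\<lambda>j. real (card (Tx S j)) * (Wt S i j)\<^sup>2 * (norm (u j))\<^sup>2
                                / (cmod (hc S t i j))\<^sup>2) ` NA S i s))
    + (\<Sum>s\<in>SBR S i. real (card (Tx S (src S i s))) * (Wt S i (src S i s))\<^sup>2
                     * (norm (u (src S i s)))\<^sup>2 / (cmod (hc S t i (src S i s)))\<^sup>2))"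

text \<open>Probability space of the fresh noise of one iteration at one receiver:
  real and imaginary parts of n^(s) $ k (s = 1..M, k \<in> 'm) are i.i.d. N(0, N0/2),
  i.e. the n^(s) are i.i.d. CN(0, N0 I_m).\<close>
definition noise_space :: "('v,'d::finite,'m::finite) lsys \<Rightarrow> (nat \<times> 'm \<times> bool \<Rightarrow> real) measure" where
  "noise_space S = (\<Pi>\<^sub>M p\<in>{1..Mslots S} \<times> (UNIV::'m set) \<times> (UNIV::bool set).
                      density lborel (normal_density 0 (sqrt (N0 S / 2))))"

definition noise_of :: "(nat \<times> 'm \<times> bool \<Rightarrow> real) \<Rightarrow> nat \<Rightarrow> complex^'m" where
  "noise_of \<omega> s = (\<chi> k. Complex (\<omega> (s, k, True)) (\<omega> (s, k, False)))"

text \<open>The Gaussian law N(0, sigma2 * I) on real^'m (also meaningful for sigma2 = 0).\<close>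
definition gauss_vec :: "real \<Rightarrow> (real^'m::finite) measure" where
  "gauss_vec sigma2 = distr (\<Pi>\<^sub>M k\<in>(UNIV::'m set). density lborel std_normal_density) borel
                          (\<lambda>g. \<chi> k. sqrt sigma2 * g k)"

definition conn_graph :: "('v::finite \<Rightarrow> 'v set) \<Rightarrow> bool" where
  "conn_graph Nb' \<longleftrightarrow> (\<forall>i j. j \<in> Nb' i \<longleftrightarrow> i \<in> Nb' j) \<and> (\<forall>i. i \<notin> Nb' i)
      \<and> (\<forall>i j. (\<lambda>a b. b \<in> Nb' a)\<^sup>*\<^sup>* i j)"

definition Wmat :: "('v::finite \<Rightarrow> 'v \<Rightarrow> real) \<Rightarrow> real^'v^'v" where
  "Wmat W = (\<chi> i j. W i j)"

definition mixing_ok :: "('v::finite \<Rightarrow> 'v set) \<Rightarrow> ('v \<Rightarrow> 'v \<Rightarrow> real) \<Rightarrow> bool" where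
  "mixing_ok Nb' W \<longleftrightarrow> (\<forall>i j. W i j = W j i) \<and> (\<forall>i j. W i j \<ge> 0)
     \<and> (\<forall>i. (\<Sum>j\<in>UNIV. W i j) = 1) \<and> (\<forall>j. (\<Sum>i\<in>UNIV. W i j) = 1)
     \<and> (\<forall>i j. j \<notin> Nb' i \<and> j \<noteq> i \<longrightarrow> W i j = 0)
     \<and> onorm (\<lambda>x. (Wmat W - (\<chi> i j. 1 / real CARD('v))) *v x) < 1"

definition coding_ok :: "('v,'d::finite,'m::finite) lsys \<Rightarrow> bool" where
  "coding_ok S \<longleftrightarrow> CARD('m) \<le> CARD('d)
     \<and> (\<forall>r c. Hm S $ r $ c \<in> {1, -1})
     \<and> (1 / dd S) *\<^sub>R (Hm S ** transpose (Hm S)) = mat 1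
     \<and> (\<forall>t k. Rd S t $ k \<in> {1, -1})"

definition schedule_ok :: "('v::finite,'d::finite,'m::finite) lsys \<Rightarrow> bool" where
  "schedule_ok S \<longleftrightarrow>
     (\<forall>i. SAT S i \<union> SAR S i \<subseteq> {s. odd s \<and> 1 \<le> s \<and> s \<le> Mslots S}
        \<and> SBT S i \<union> SBR S i \<subseteq> {s. even s \<and> 1 \<le> s \<and> s \<le> Mslots S}
        \<and> SAT S i \<inter> SAR S i = {} \<and> SBT S i \<inter> SBR S i = {})
   \<and> (\<forall>j. \<forall>s\<in>SAR S j. NA S j s \<noteq> {} \<and> NA S j s \<subseteq> Nb S j \<and> (\<forall>i\<in>NA S j s. s \<in> SAT S i))
   \<and> (\<forall>j. \<forall>s\<in>SBR S j. src S j s \<in> Nb S j \<and> s \<in> SBT S (src S j s))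
   \<and> (\<forall>j. \<forall>s\<in>SAR S j. \<forall>s'\<in>SAR S j. s \<noteq> s' \<longrightarrow> NA S j s \<inter> NA S j s' = {})
   \<and> (\<forall>j. \<forall>s\<in>SBR S j. \<forall>s'\<in>SBR S j. s \<noteq> s' \<longrightarrow> src S j s \<noteq> src S j s')
   \<and> (\<forall>j. \<forall>s\<in>SAR S j. \<forall>s'\<in>SBR S j. src S j s' \<notin> NA S j s)
   \<and> (\<forall>j. Nb S j = (\<Union>s\<in>SAR S j. NA S j s) \<union> src S j ` SBR S j)"

definition channel_ok :: "('v::finite,'d::finite,'m::finite) lsys \<Rightarrow> bool" where
  "channel_ok S \<longleftrightarrow> (\<forall>t i j. j \<in> Nb S i \<longrightarrow> hc S t i j \<noteq> 0 \<and> hc S t i j = hc S t j i)"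

definition params_ok :: "('v::finite,'d::finite,'m::finite) lsys \<Rightarrow> bool" where
  "params_ok S \<longleftrightarrow> (\<forall>t. eta S t > 0 \<and> zeta S t \<ge> 0 \<and> Pw S t > 0) \<and> N0 S > 0"

end

theory Submission
  imports Defs
begin

text \<open>
  Power control inverts every channel, so in each receive
  slot device i obtains the exact coded updates w_ij A u_j of the neighbours served in that slot,
  plus a scaled copy of its own receiver noise. The AirComp groups and the broadcasters partition
  the neighbourhood N_i, so by induction y_hat_i is the w-weighted sum of the theta_hat_j over N_i
  plus the accumulated noise. Row i of W sums to 1 over N_i and {i}, which turns
  w_ii theta_hat_i + sum_j w_ij theta_hat_j - theta_hat_i into sum_j w_ij (theta_hat_j - theta_hat_i).

  The effective noise is sum_s Re (c_s n_s) for complex gains c_s. Each of its components is a real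
  linear combination of independent N(0, N0/2) variables (the real and imaginary parts of the noise
  entries), and different components use disjoint variables; hence it is Gaussian with covariance
  N0/2 sum_s |c_s|^2 I. In an AirComp slot |c_s|^2 = 1/gamma, and the minimum of reciprocals that
  defines gamma is the reciprocal of a maximum, which gives Ntil.
\<close>

lemma Min_divide_image:
  fixes g :: "'a \<Rightarrow> real"
  assumes "finite A" "A \<noteq> {}" "\<And>j. j \<in> A \<Longrightarrow> g j > 0" "c > 0"
  shows "Min ((\<lambda>j. c / g j) ` A) = c / Max (g ` A)"
proof (rule Min_eqI)
  show "finite ((\<lambda>j. c / g j) ` A)" using assms(1) by simp
  have "Max (g ` A) \<in> g ` A" using assms(1,2) by simp
  then obtain j0 where j0: "j0 \<in> A" "Max (g ` A) = g j0" by blast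
  show "c / Max (g ` A) \<in> (\<lambda>j. c / g j) ` A"
    unfolding j0(2) using j0(1) by (rule imageI)
  fix y assume "y \<in> (\<lambda>j. c / g j) ` A"
  then obtain j where j: "j \<in> A" "y = c / g j" by blast
  have "g j \<le> Max (g ` A)" "0 < g j"
    using assms(1,3) j(1) by simp_all
  then show "c / Max (g ` A) \<le> y"
    unfolding j(2) using assms(4) by (intro divide_left_mono) simp_all
qed

lemma sum_scaleR_diff_eq:
  fixes x :: "'a \<Rightarrow> 'b::real_vector"
  assumes "finite A" "(\<Sum>j\<in>A. w j) = 1"
  shows "(\<Sum>j\<in>A. w j *\<^sub>R (x j - y)) = (\<Sum>j\<in>A. w j *\<^sub>R x j) - y"
  using assms by (simp add: scaleR_diff_right sum_subtractf flip: scaleR_sum_left)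

section \<open>Gaussian linear combinations of independent coordinates\<close>

lemma indep_vars_PiM_components:
  assumes M: "\<And>i. i \<in> I \<Longrightarrow> prob_space (M i)"
  shows "prob_space.indep_vars (PiM I M) M (\<lambda>i \<omega>. \<omega> i) I"
proof -
  interpret P: prob_space "PiM I M" by (rule prob_space_PiM[OF M])
  show ?thesis
  proof (cases "I = {}")
    case True
    show ?thesis unfolding P.indep_vars_def P.indep_sets_def using True by simp
  next
    case False
    have "distr (PiM I M) (PiM I M) (\<lambda>\<omega>. \<lambda>i\<in>I. \<omega> i) = PiM I M"
      by (subst distr_cong[where g="\<lambda>\<omega>. \<omega>", OF refl refl]) (auto simp: space_PiM PiE_def extensional_restrict)
    also have "\<dots> = PiM I (\<lambda>i. distr (PiM I M) (M i) (\<lambda>\<omega>. \<omega> i))"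
      by (intro PiM_cong refl distr_PiM_component[symmetric] M)
    finally show ?thesis
      by (subst P.indep_vars_iff_distr_eq_PiM'[OF False]) auto
  qed
qed

lemma borel_measurable_vec_lambda_PiM:
  "(\<lambda>f. (\<chi> k. f k) :: real^'m::finite) \<in> borel_measurable (PiM UNIV (\<lambda>_. borel))"
proof (subst borel_measurable_euclidean_space, intro ballI)
  fix b :: "real^'m" assume "b \<in> Basis"
  then obtain i u where b: "b = axis i u" by (auto simp: Basis_vec_def)
  show "(\<lambda>f. (\<chi> k. f k) \<bullet> b) \<in> borel_measurable (PiM UNIV (\<lambda>_. borel))"
    by (simp add: b inner_axis)
qed

text \<open>\<open>N(0, v)\<close> as the image of the standard normal law, so that \<open>v = 0\<close> gives the point mass at 0,
  as in \<^const>\<open>gauss_vec\<close>.\<close>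

definition centered_normal :: "real \<Rightarrow> real measure" where
  "centered_normal v = distr (density lborel std_normal_density) borel (\<lambda>x. sqrt v * x)"

lemma centered_normal_0: "centered_normal 0 = return borel 0"
proof -
  interpret prob_space "density lborel std_normal_density"
    by (rule prob_space_normal_density) simp
  have "distr (density lborel std_normal_density) borel (\<lambda>x. sqrt 0 * x) =
      distr (density lborel std_normal_density) borel (\<lambda>_. 0 :: real)"
    by (rule distr_cong) simp_all
  also have "\<dots> = return borel 0"
    by (rule distr_const) simp
  finally show ?thesis unfolding centered_normal_def .
qed

lemma (in prob_space) distr_eq_centered_normal:
  assumes X: "distributed M lborel X (normal_density 0 (sqrt v))" and v: "v > 0"
  shows "distr M borel X = centered_normal v"
proof -
  let ?Q = "density lborel std_normal_density"
  interpret Q: prob_space ?Q by (rule prob_space_normal_density) simp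
  have "distributed ?Q lborel (\<lambda>x. x) std_normal_density"
    unfolding distributed_def by (simp add: distr_id2)
  from Q.normal_density_affine[OF this, of "sqrt v" 0]
  have "distributed ?Q lborel (\<lambda>x. sqrt v * x) (normal_density 0 (sqrt v))"
    using v by simp
  then have "centered_normal v = density lborel (normal_density 0 (sqrt v))"
    unfolding centered_normal_def
    by (subst distr_cong[OF refl sets_lborel[symmetric] refl]) (rule distributed_distr_eq_density)
  also have "\<dots> = distr M borel X"
    by (subst distr_cong[OF refl sets_lborel[symmetric] refl]) (rule distributed_distr_eq_density[OF X, symmetric])
  finally show ?thesis ..
qed

lemma distributed_PiM_component_normal:
  assumes "\<sigma> > 0" "p \<in> I"
  shows "distributed (PiM I (\<lambda>_. density lborel (normal_density 0 \<sigma>))) lborel (\<lambda>\<omega>. \<omega> p)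
           (normal_density 0 \<sigma>)"
proof -
  let ?N = "density lborel (normal_density 0 \<sigma>)"
  have "distr (PiM I (\<lambda>_. ?N)) ?N (\<lambda>\<omega>. \<omega> p) = ?N"
    using assms by (intro distr_PiM_component prob_space_normal_density)
  then have "distr (PiM I (\<lambda>_. ?N)) lborel (\<lambda>\<omega>. \<omega> p) = ?N"
    by (simp cong: distr_cong)
  moreover have "(\<lambda>\<omega>. \<omega> p) \<in> measurable (PiM I (\<lambda>_. ?N)) lborel"
    using measurable_component_singleton[OF assms(2), of "\<lambda>_. ?N"] by simp
  ultimately show ?thesis
    by (simp add: distributed_def)
qed

lemma distr_lincomb_normal_coordinates:
  fixes c :: "'i \<Rightarrow> real"
  assumes \<sigma>: "\<sigma> > 0" and B: "finite B" "B \<subseteq> I"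
  shows "distr (PiM I (\<lambda>_. density lborel (normal_density 0 \<sigma>))) borel (\<lambda>\<omega>. \<Sum>p\<in>B. c p * \<omega> p)
       = centered_normal (\<sigma>\<^sup>2 * (\<Sum>p\<in>B. (c p)\<^sup>2))"
proof -
  let ?N = "density lborel (normal_density 0 \<sigma>)"
  let ?M = "PiM I (\<lambda>_. ?N)"
  interpret P: prob_space ?M
    by (intro prob_space_PiM prob_space_normal_density \<sigma>)
  txt \<open>\<open>sum_indep_normal\<close> needs a nonempty index set and \<open>normal_density_affine\<close> a nonzero
    factor, so only the nonzero coefficients are kept.\<close>
  define B' where "B' = {p\<in>B. c p \<noteq> 0}"
  have B': "finite B'" "B' \<subseteq> I" using B by (auto simp: B'_def)
  have sum_B': "(\<Sum>p\<in>B. c p * \<omega> p) = (\<Sum>p\<in>B'. c p * \<omega> p)" for \<omega>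
    by (rule sum.mono_neutral_right) (auto simp: B'_def B)
  have sq_B': "(\<Sum>p\<in>B. (c p)\<^sup>2) = (\<Sum>p\<in>B'. (c p)\<^sup>2)"
    by (rule sum.mono_neutral_right) (auto simp: B'_def B)
  show ?thesis
  proof (cases "B' = {}")
    case True
    have "distr ?M borel (\<lambda>\<omega>. \<Sum>p\<in>B. c p * \<omega> p) = distr ?M borel (\<lambda>_. 0)"
      by (rule distr_cong) (simp_all add: sum_B' True)
    also have "\<dots> = return borel 0"
      by (rule P.distr_const) simp
    finally show ?thesis by (simp add: sq_B' True centered_normal_0)
  next
    case False
    have "P.indep_vars (\<lambda>_. ?N) (\<lambda>p \<omega>. \<omega> p) B'"
      by (rule P.indep_vars_subset[OF indep_vars_PiM_components B'(2)])
        (simp add: prob_space_normal_density \<sigma>)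
    then have indep: "P.indep_vars (\<lambda>_. borel) (\<lambda>p \<omega>. c p * \<omega> p) B'"
      by (rule P.indep_vars_compose2) simp
    have normal: "distributed ?M lborel (\<lambda>\<omega>. c p * \<omega> p) (normal_density 0 (\<bar>c p\<bar> * \<sigma>))"
      if "p \<in> B'" for p
      using P.normal_density_affine[OF distributed_PiM_component_normal[OF \<sigma>], of p "c p" 0]
        that B'(2) \<sigma> by (auto simp: B'_def)
    have "distributed ?M lborel (\<lambda>\<omega>. \<Sum>p\<in>B'. c p * \<omega> p)
        (normal_density (\<Sum>p\<in>B'. 0) (sqrt (\<Sum>p\<in>B'. (\<bar>c p\<bar> * \<sigma>)\<^sup>2)))"
      by (rule P.sum_indep_normal[OF B'(1) False indep _ normal]) (auto simp: B'_def \<sigma>)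
    moreover have "(\<Sum>p\<in>B'. (\<bar>c p\<bar> * \<sigma>)\<^sup>2) = \<sigma>\<^sup>2 * (\<Sum>p\<in>B'. (c p)\<^sup>2)"
      by (simp add: sum_distrib_left power_mult_distrib mult.commute)
    moreover have "\<sigma>\<^sup>2 * (\<Sum>p\<in>B'. (c p)\<^sup>2) > 0"
      using False B'(1) \<sigma> by (intro mult_pos_pos sum_pos) (auto simp: B'_def)
    ultimately show ?thesis
      by (simp add: sum_B' sq_B' P.distr_eq_centered_normal)
  qed
qed

lemma (in prob_space) distr_vec_lambda_iid:
  fixes Y :: "'m::finite \<Rightarrow> 'a \<Rightarrow> real"
  assumes indep: "indep_vars (\<lambda>_. borel) Y UNIV" and law: "\<And>k. distr M borel (Y k) = L"
  shows "distr M borel (\<lambda>\<omega>. \<chi> k. Y k \<omega>) = distr (PiM UNIV (\<lambda>_. L)) borel (\<lambda>f. \<chi> k. f k)"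
proof -
  have rv: "\<And>k. random_variable borel (Y k)"
    using indep unfolding indep_vars_def by blast
  have "distr M borel (\<lambda>\<omega>. \<chi> k. Y k \<omega>)
      = distr M borel ((\<lambda>f. \<chi> k. f k) \<circ> (\<lambda>\<omega>. \<lambda>k\<in>UNIV. Y k \<omega>))"
    by (simp add: comp_def restrict_def)
  also have "\<dots> = distr (distr M (PiM UNIV (\<lambda>_. borel)) (\<lambda>\<omega>. \<lambda>k\<in>UNIV. Y k \<omega>)) borel
      (\<lambda>f. \<chi> k. f k)"
    by (intro distr_distr[symmetric] borel_measurable_vec_lambda_PiM measurable_restrict rv)
  also have "distr M (PiM UNIV (\<lambda>_. borel)) (\<lambda>\<omega>. \<lambda>k\<in>UNIV. Y k \<omega>) = PiM UNIV (\<lambda>_. L)"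
    using indep_vars_iff_distr_eq_PiM[THEN iffD1, OF UNIV_not_empty rv indep] by (simp add: law)
  finally show ?thesis .
qed

lemma gauss_vec_eq_PiM_centered_normal:
  "gauss_vec v = distr (PiM UNIV (\<lambda>_. centered_normal v)) borel (\<lambda>f. (\<chi> k. f k) :: real^'m::finite)"
proof -
  let ?Q = "density lborel std_normal_density"
  let ?G = "PiM (UNIV :: 'm set) (\<lambda>_. ?Q)"
  interpret G: prob_space ?G
    by (intro prob_space_PiM prob_space_normal_density) simp
  have "G.indep_vars (\<lambda>_. ?Q) (\<lambda>k g. g k) UNIV"
    by (rule indep_vars_PiM_components) (simp add: prob_space_normal_density)
  then have indep: "G.indep_vars (\<lambda>_. borel) (\<lambda>k g. sqrt v * g k) UNIV"
    by (rule G.indep_vars_compose2) simp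
  have law: "distr ?G borel (\<lambda>g. sqrt v * g k) = centered_normal v" for k
  proof -
    have "distr ?G borel (\<lambda>g. sqrt v * g k) = distr (distr ?G ?Q (\<lambda>g. g k)) borel (\<lambda>x. sqrt v * x)"
      by (subst distr_distr) (simp_all add: comp_def)
    also have "distr ?G ?Q (\<lambda>g. g k) = ?Q"
      by (rule distr_PiM_component) (simp_all add: prob_space_normal_density)
    finally show ?thesis unfolding centered_normal_def .
  qed
  show ?thesis
    unfolding gauss_vec_def by (rule G.distr_vec_lambda_iid[OF indep law])
qed

lemma distr_Re_lincomb_noise_of:
  fixes c :: "nat \<Rightarrow> complex"
  assumes \<sigma>: "\<sigma> > 0" and J: "finite J" "J \<subseteq> T"
  shows "distr (PiM (T \<times> (UNIV :: 'm::finite set) \<times> (UNIV :: bool set))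
                  (\<lambda>_. density lborel (normal_density 0 \<sigma>))) borel (\<lambda>\<omega>. (\<chi> k. \<Sum>s\<in>J. Re (c s * noise_of \<omega> s $ k)) :: real^'m)
       = gauss_vec (\<sigma>\<^sup>2 * (\<Sum>s\<in>J. (cmod (c s))\<^sup>2))"
proof -
  let ?I = "T \<times> (UNIV :: 'm set) \<times> (UNIV :: bool set)"
  let ?N = "density lborel (normal_density 0 \<sigma>)"
  let ?M = "PiM ?I (\<lambda>_. ?N)"
  interpret P: prob_space ?M
    by (intro prob_space_PiM prob_space_normal_density \<sigma>)
  txt \<open>Component \<open>k\<close> only uses the coordinates in \<open>B k\<close>, with the coefficients \<open>a\<close> of
    \<open>Re (c z) = Re c Re z - Im c Im z\<close>.\<close>
  define B where "B k = J \<times> {k} \<times> (UNIV :: bool set)" for k :: 'm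
  define a where "a p = (if snd (snd p) then Re (c (fst p)) else - Im (c (fst p)))"
    for p :: "nat \<times> 'm \<times> bool"
  define Y where "Y k \<omega> = (\<Sum>p\<in>B k. a p * \<omega> p)" for k \<omega>
  have sum_B: "(\<Sum>p\<in>B k. g p) = (\<Sum>s\<in>J. g (s, k, True) + g (s, k, False))"
    for k and g :: "nat \<times> 'm \<times> bool \<Rightarrow> real"
    by (simp add: B_def sum.cartesian_product' UNIV_bool add.commute)
  have B: "finite (B k)" "B k \<subseteq> ?I" for k
    using J by (auto simp: B_def)
  have Y_eq: "(\<Sum>s\<in>J. Re (c s * noise_of \<omega> s $ k)) = Y k \<omega>" for k \<omega>
    by (simp add: Y_def sum_B a_def noise_of_def algebra_simps)
  have sq_eq: "(\<Sum>p\<in>B k. (a p)\<^sup>2) = (\<Sum>s\<in>J. (cmod (c s))\<^sup>2)" for k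
    by (simp add: sum_B a_def cmod_power2)
  have law: "distr ?M borel (Y k) = centered_normal (\<sigma>\<^sup>2 * (\<Sum>s\<in>J. (cmod (c s))\<^sup>2))" for k
    using distr_lincomb_normal_coordinates[OF \<sigma> B, of a k] by (simp add: Y_def[abs_def] sq_eq)
  have coordinates: "P.indep_vars (\<lambda>_. ?N) (\<lambda>p \<omega>. \<omega> p) ?I"
    by (rule indep_vars_PiM_components) (simp add: prob_space_normal_density \<sigma>)
  have "P.indep_vars (\<lambda>_. borel) (\<lambda>p \<omega>. \<omega> p) ?I"
    using P.indep_vars_compose2[OF coordinates, where Y="\<lambda>_ x. x" and N="\<lambda>_. borel"] by simp
  then have "P.indep_vars (\<lambda>k. PiM (B k) (\<lambda>_. borel)) (\<lambda>k \<omega>. restrict \<omega> (B k)) UNIV"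
    by (rule P.indep_vars_restrict[where K=B]) (use B(2) in \<open>auto simp: disjoint_family_on_def B_def\<close>)
  then have "P.indep_vars (\<lambda>_. borel) (\<lambda>k \<omega>. \<Sum>p\<in>B k. a p * restrict \<omega> (B k) p) UNIV"
    by (rule P.indep_vars_compose2) (auto intro!: borel_measurable_sum borel_measurable_times measurable_component_singleton)
  then have indep: "P.indep_vars (\<lambda>_. borel) Y UNIV"
    by (simp add: Y_def[abs_def] cong: sum.cong)
  show ?thesis
    unfolding Y_eq gauss_vec_eq_PiM_centered_normal
    by (rule P.distr_vec_lambda_iid[OF indep law])
qed

lemma linear_decomp: "linear (decomp S t)"
proof -
  have "decomp S t = (\<lambda>x. ((mm S / dd S) *\<^sub>R transpose (Amat S t)) *v x)"
    unfolding decomp_def by (intro ext) (rule scaleR_matrix_vector_assoc)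
  then show ?thesis by simp
qed

lemma yhat_air_eq:
  assumes g: "gam S t u i s > 0" and h: "\<And>j. j \<in> NA S i s \<Longrightarrow> hc S t j i \<noteq> 0"
  shows "yhat_air S t u i s = (\<Sum>j\<in>NA S i s. Wt S i j *\<^sub>R decomp S t (Amat S t *v u j))
          + decomp S t (Re_vec (complex_of_real (1 / sqrt (gam S t u i s)) *s noise S t s i))"
proof -
  let ?g = "gam S t u i s"
  have y: "y_air S t u i s $ k =
      complex_of_real (sqrt ?g * (\<Sum>j\<in>NA S i s. Wt S i j * (Amat S t *v u j) $ k)) + noise S t s i $ k" for k
    using h by (simp add: y_air_def x_air_def cvec_def sum_distrib_left field_simps cong: sum.cong)
  have "Re_vec (complex_of_real (1 / sqrt ?g) *s y_air S t u i s)
      = (\<Sum>j\<in>NA S i s. Wt S i j *\<^sub>R (Amat S t *v u j)) + Re_vec (complex_of_real (1 / sqrt ?g) *s noise S t s i)"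
    using g by (simp add: vec_eq_iff Re_vec_def y distrib_left)
  then show ?thesis
    unfolding yhat_air_def by (simp add: linear_add[OF linear_decomp] linear_sum[OF linear_decomp]
        linear_scale[OF linear_decomp])
qed

lemma yhat_bc_eq:
  assumes a: "alp S t u j > 0" and h: "hc S t j i \<noteq> 0"
  shows "yhat_bc S t u j i s = Wt S i j *\<^sub>R decomp S t (Amat S t *v u j)
      + Wt S i j *\<^sub>R decomp S t (Re_vec ((1 / (complex_of_real (sqrt (alp S t u j)) * hc S t j i)) *s noise S t s i))"
proof -
  let ?c = "1 / (complex_of_real (sqrt (alp S t u j)) * hc S t j i)"
  have "complex_of_real (sqrt (alp S t u j)) \<noteq> 0"
    using a by simp
  then have cancel: "?c * (hc S t j i * (complex_of_real (sqrt (alp S t u j)) * complex_of_real x))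
      = complex_of_real x" for x
    using h by (simp add: field_simps)
  have "(?c *s y_bc S t u j i s) $ k = complex_of_real ((Amat S t *v u j) $ k) + ?c * noise S t s i $ k" for k
    unfolding y_bc_def x_bc_def cvec_def vector_smult_component vector_add_component vec_lambda_beta
    by (simp only: distrib_left cancel)
  then have "Re_vec (?c *s y_bc S t u j i s) = (Amat S t *v u j) + Re_vec (?c *s noise S t s i)"
    by (simp add: vec_eq_iff Re_vec_def)
  then show ?thesis
    unfolding yhat_bc_def by (simp add: linear_add[OF linear_decomp] scaleR_add_right)
qed

definition y_hat :: "('v,'d::finite,'m::finite) lsys \<Rightarrow> nat \<Rightarrow> 'v \<Rightarrow> real^'d" where
  "y_hat S t = snd (snd (run S t))"

lemma theta_hat_Suc: "theta_hat S (Suc t) j = theta_hat S t j + decomp S t (Amat S t *v uvec S t j)"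
  by (simp add: theta_hat_def uvec_def step_def Let_def)

lemma y_hat_Suc:
  "y_hat S (Suc t) j = y_hat S t j + (\<Sum>s\<in>SAR S j. yhat_air S t (uvec S t) j s)
                                   + (\<Sum>s\<in>SBR S j. yhat_bc S t (uvec S t) (src S j s) j s)"
  by (simp add: y_hat_def uvec_def step_def Let_def)

lemma theta_Suc:
  "theta S (Suc t) j = theta_half S t j
     + zeta S t *\<^sub>R (Wt S j j *\<^sub>R theta_hat S (Suc t) j + y_hat S (Suc t) j - theta_hat S (Suc t) j)"
  by (simp add: theta_def theta_hat_def theta_half_def y_hat_def uvec_def step_def Let_def)

lemma mixing_row_sum_closed_nbhd:
  fixes W :: "'v::finite \<Rightarrow> 'v \<Rightarrow> real"
  assumes "mixing_ok N W"
  shows "(\<Sum>j\<in>insert i (N i). W i j) = 1"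
proof -
  have "W i j = 0" if "j \<notin> insert i (N i)" for j
    using assms that unfolding mixing_ok_def by blast
  then have "(\<Sum>j\<in>insert i (N i). W i j) = (\<Sum>j\<in>UNIV. W i j)"
    by (intro sum.mono_neutral_left) auto
  also have "\<dots> = 1"
    using assms unfolding mixing_ok_def by blast
  finally show ?thesis .
qed

section \<open>Received signals under the standing assumptions\<close>

definition noise_weight ::
    "('v,'d::finite,'m::finite) lsys \<Rightarrow> nat \<Rightarrow> ('v \<Rightarrow> real^'d) \<Rightarrow> 'v \<Rightarrow> 'v \<Rightarrow> real" where
  "noise_weight S t u i j = real (card (Tx S j)) * (Wt S i j)\<^sup>2 * (norm (u j))\<^sup>2 / (cmod (hc S t i j))\<^sup>2"

definition noise_gain ::
    "('v,'d::finite,'m::finite) lsys \<Rightarrow> nat \<Rightarrow> ('v \<Rightarrow> real^'d) \<Rightarrow> 'v \<Rightarrow> nat \<Rightarrow> complex" where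
  "noise_gain S t u i s =
     (if s \<in> SAR S i then complex_of_real (1 / sqrt (gam S t u i s))
      else complex_of_real (Wt S i (src S i s))
             / (complex_of_real (sqrt (alp S t u (src S i s))) * hc S t (src S i s) i))"

lemma Ntil_eq_noise_weight:
  "Ntil S t u i = N0 S / 2 / (Nuse S * Pw S t) *
     ((\<Sum>s\<in>SAR S i. Max (noise_weight S t u i ` NA S i s)) + (\<Sum>s\<in>SBR S i. noise_weight S t u i (src S i s)))"
  by (simp add: Ntil_def noise_weight_def[abs_def])

text \<open>\<open>AirComp_weight_nonzero\<close> keeps \<^const>\<open>gam\<close> positive: a zero weight would make its
  denominator, and by \<open>x / 0 = 0\<close> the whole minimum, vanish.\<close>

locale analog_consensus =
  fixes S :: "('v::finite, 'd::finite, 'm::finite) lsys"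
  assumes sched: "schedule_ok S"
    and chan: "channel_ok S"
    and par: "params_ok S"
    and AirComp_weight_nonzero: "\<And>j s i. s \<in> SAR S j \<Longrightarrow> i \<in> NA S j s \<Longrightarrow> Wt S j i \<noteq> 0"
begin

lemmas slot_conditions = sched[unfolded schedule_ok_def, THEN conjunct1, rule_format]
lemmas AirComp_conditions = sched[unfolded schedule_ok_def, THEN conjunct2, THEN conjunct1, rule_format]
lemmas broadcast_conditions =
  sched[unfolded schedule_ok_def, THEN conjunct2, THEN conjunct2, THEN conjunct1, rule_format]
lemmas neighbourhood_partition = sched[unfolded schedule_ok_def, THEN conjunct2, THEN conjunct2, THEN conjunct2]

lemma slots_in_block: "SAT S i \<union> SAR S i \<union> SBT S i \<union> SBR S i \<subseteq> {1..Mslots S}"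
  using slot_conditions[of i] by auto

lemma receive_slots_disjoint: "SAR S i \<inter> SBR S i = {}"
  using slot_conditions[of i] by auto

lemma finite_SAR: "finite (SAR S i)" and finite_SBR: "finite (SBR S i)"
  using slots_in_block[of i] by (auto intro: finite_subset)

lemma Nuse_pos: "s \<in> SAT S i \<union> SAR S i \<union> SBT S i \<union> SBR S i \<Longrightarrow> Nuse S > 0"
  using slots_in_block[of i] by (auto simp: Nuse_def)

lemma card_Tx_pos: "s \<in> SAT S j \<union> SBT S j \<Longrightarrow> card (Tx S j) > 0"
  using slots_in_block[of j] by (auto simp: Tx_def card_gt_0_iff intro: finite_subset)

lemma AirComp_groupD:
  assumes "s \<in> SAR S i" "j \<in> NA S i s"
  shows "j \<in> Nb S i" "s \<in> SAT S j"
  using AirComp_conditions[OF assms(1)] assms(2) by blast+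

lemma AirComp_group_nonempty: "s \<in> SAR S i \<Longrightarrow> NA S i s \<noteq> {}"
  using AirComp_conditions by blast

lemma broadcasterD:
  assumes "s \<in> SBR S i"
  shows "src S i s \<in> Nb S i" "s \<in> SBT S (src S i s)"
  using broadcast_conditions[OF assms] by blast+

lemma sum_Nb_by_slots:
  "(\<Sum>j\<in>Nb S i. g j) = (\<Sum>s\<in>SAR S i. \<Sum>j\<in>NA S i s. g j) + (\<Sum>s\<in>SBR S i. g (src S i s))"
proof -
  have partition: "Nb S i = (\<Union>s\<in>SAR S i. NA S i s) \<union> src S i ` SBR S i"
    and groups_disjoint: "\<forall>s\<in>SAR S i. \<forall>s'\<in>SAR S i. s \<noteq> s' \<longrightarrow> NA S i s \<inter> NA S i s' = {}"
    and src_inj: "inj_on (src S i) (SBR S i)"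
    and separated: "(\<Union>s\<in>SAR S i. NA S i s) \<inter> src S i ` SBR S i = {}"
    using neighbourhood_partition unfolding inj_on_def by blast+
  have "(\<Sum>j\<in>Nb S i. g j) = (\<Sum>j\<in>(\<Union>s\<in>SAR S i. NA S i s). g j) + (\<Sum>j\<in>src S i ` SBR S i. g j)"
    unfolding partition by (rule sum.union_disjoint) (simp_all add: finite_SBR separated)
  also have "(\<Sum>j\<in>(\<Union>s\<in>SAR S i. NA S i s). g j) = (\<Sum>s\<in>SAR S i. \<Sum>j\<in>NA S i s. g j)"
    by (rule sum.UNION_disjoint[OF finite_SAR _ groups_disjoint]) simp
  also have "(\<Sum>j\<in>src S i ` SBR S i. g j) = (\<Sum>s\<in>SBR S i. g (src S i s))"
    by (rule sum.reindex[OF src_inj, unfolded comp_def])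
  finally show ?thesis .
qed

lemma hc_nonzero: "j \<in> Nb S i \<Longrightarrow> hc S t j i \<noteq> 0"
  and hc_commute: "j \<in> Nb S i \<Longrightarrow> hc S t i j = hc S t j i"
  using chan unfolding channel_ok_def by metis+

lemma Pw_pos: "Pw S t > 0" and N0_pos: "N0 S > 0"
  using par unfolding params_ok_def by blast+

lemma noise_weight_pos:
  assumes u: "\<And>j. u j \<noteq> 0" and s: "s \<in> SAR S i" and j: "j \<in> NA S i s"
  shows "noise_weight S t u i j > 0"
proof -
  have "hc S t i j \<noteq> 0"
    using hc_nonzero hc_commute AirComp_groupD(1)[OF s j] by metis
  moreover have "card (Tx S j) > 0"
    using card_Tx_pos AirComp_groupD(2)[OF s j] by blast
  ultimately show ?thesis
    using AirComp_weight_nonzero[OF s j] u[of j] by (simp add: noise_weight_def)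
qed

lemma gam_eq_Max_noise_weight:
  assumes u: "\<And>j. u j \<noteq> 0" and s: "s \<in> SAR S i"
  shows "gam S t u i s = Nuse S * Pw S t / Max (noise_weight S t u i ` NA S i s)"
proof -
  have "gam S t u i s = Min ((\<lambda>j. Nuse S * Pw S t / noise_weight S t u i j) ` NA S i s)"
    unfolding gam_def noise_weight_def
    by (intro arg_cong[where f=Min] image_cong refl)
      (simp add: hc_commute[OF AirComp_groupD(1)[OF s]])
  also have "\<dots> = Nuse S * Pw S t / Max (noise_weight S t u i ` NA S i s)"
    using Nuse_pos[of s i] Pw_pos s
    by (intro Min_divide_image noise_weight_pos[OF u s] AirComp_group_nonempty[OF s]) auto
  finally show ?thesis .
qed

lemma Max_noise_weight_pos:
  assumes u: "\<And>j. u j \<noteq> 0" and s: "s \<in> SAR S i"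
  shows "Max (noise_weight S t u i ` NA S i s) > 0"
proof -
  obtain j where "j \<in> NA S i s"
    using AirComp_group_nonempty[OF s] by blast
  then show ?thesis
    using noise_weight_pos[where u=u, OF u s] by (subst Max_gr_iff) auto
qed

lemma gam_pos:
  assumes u: "\<And>j. u j \<noteq> 0" and s: "s \<in> SAR S i"
  shows "gam S t u i s > 0"
  using Max_noise_weight_pos[where u=u, OF u s] Nuse_pos[of s i] Pw_pos s
  by (simp add: gam_eq_Max_noise_weight[where u=u, OF u s])

lemma alp_pos: "u j \<noteq> 0 \<Longrightarrow> s \<in> SBT S j \<Longrightarrow> alp S t u j > 0"
  using card_Tx_pos[of s j] Nuse_pos[of s j] Pw_pos by (simp add: alp_def)

lemma cmod_noise_gain_AirComp:
  assumes u: "\<And>j. u j \<noteq> 0" and s: "s \<in> SAR S i"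
  shows "(cmod (noise_gain S t u i s))\<^sup>2 = Max (noise_weight S t u i ` NA S i s) / (Nuse S * Pw S t)"
proof -
  have "gam S t u i s > 0"
    using u s by (rule gam_pos)
  then have "(cmod (noise_gain S t u i s))\<^sup>2 = 1 / gam S t u i s"
    using s by (simp add: noise_gain_def norm_divide power_divide)
  also have "\<dots> = Max (noise_weight S t u i ` NA S i s) / (Nuse S * Pw S t)"
    by (simp add: gam_eq_Max_noise_weight[where u=u, OF u s])
  finally show ?thesis .
qed

lemma cmod_noise_gain_broadcast:
  assumes u: "\<And>j. u j \<noteq> 0" and s: "s \<in> SBR S i"
  shows "(cmod (noise_gain S t u i s))\<^sup>2 = noise_weight S t u i (src S i s) / (Nuse S * Pw S t)"
proof -
  let ?j = "src S i s"
  have "s \<notin> SAR S i" using s receive_slots_disjoint by blast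
  moreover have "card (Tx S ?j) > 0"
    using card_Tx_pos broadcasterD(2)[OF s] by blast
  moreover have "hc S t ?j i \<noteq> 0" "hc S t i ?j = hc S t ?j i"
    using hc_nonzero hc_commute broadcasterD(1)[OF s] by blast+
  moreover have "Nuse S * Pw S t > 0"
    using Nuse_pos[of s i] Pw_pos s by simp
  ultimately show ?thesis
    using u[of ?j]
    by (simp add: noise_gain_def alp_def noise_weight_def norm_divide norm_mult power_divide
        power_mult_distrib field_simps)
qed

lemma Ntil_eq_sum_cmod_noise_gain:
  assumes u: "\<And>j. u j \<noteq> 0"
  shows "Ntil S t u i = (sqrt (N0 S / 2))\<^sup>2 * (\<Sum>s\<in>SAR S i \<union> SBR S i. (cmod (noise_gain S t u i s))\<^sup>2)"
proof -
  have "(\<Sum>s\<in>SAR S i \<union> SBR S i. (cmod (noise_gain S t u i s))\<^sup>2)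
      = (\<Sum>s\<in>SAR S i. (cmod (noise_gain S t u i s))\<^sup>2) + (\<Sum>s\<in>SBR S i. (cmod (noise_gain S t u i s))\<^sup>2)"
    by (rule sum.union_disjoint[OF finite_SAR finite_SBR receive_slots_disjoint])
  also have "\<dots> = ((\<Sum>s\<in>SAR S i. Max (noise_weight S t u i ` NA S i s))
                  + (\<Sum>s\<in>SBR S i. noise_weight S t u i (src S i s))) / (Nuse S * Pw S t)"
    by (simp add: cmod_noise_gain_AirComp[OF u] cmod_noise_gain_broadcast[OF u]
        add_divide_distrib sum_divide_distrib)
  finally show ?thesis
    using N0_pos by (simp add: Ntil_eq_noise_weight)
qed

lemma eff_noise_eq_noise_gain:
  "eff_noise S t u i z = (\<chi> k. \<Sum>s\<in>SAR S i \<union> SBR S i. Re (noise_gain S t u i s * z s $ k))"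
proof -
  have air: "Re_vec (complex_of_real (1 / sqrt (gam S t u i s)) *s z s) $ k = Re (noise_gain S t u i s * z s $ k)"
    if "s \<in> SAR S i" for s k
    using that by (simp add: noise_gain_def Re_vec_def)
  have bc: "Wt S i (src S i s) *\<^sub>R Re_vec ((1 / (complex_of_real (sqrt (alp S t u (src S i s)))
              * hc S t (src S i s) i)) *s z s) $ k
          = Re (noise_gain S t u i s * z s $ k)"
    if "s \<in> SBR S i" for s k
  proof -
    have "s \<notin> SAR S i" using that receive_slots_disjoint by blast
    then have "noise_gain S t u i s * z s $ k = Wt S i (src S i s) *\<^sub>R
        ((1 / (complex_of_real (sqrt (alp S t u (src S i s))) * hc S t (src S i s) i)) * z s $ k)"
      by (simp add: noise_gain_def scaleR_conv_of_real)
    then show ?thesis by (simp add: Re_vec_def)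
  qed
  have "eff_noise S t u i z $ k = (\<Sum>s\<in>SAR S i. Re (noise_gain S t u i s * z s $ k))
      + (\<Sum>s\<in>SBR S i. Re (noise_gain S t u i s * z s $ k))" for k
    unfolding eff_noise_def vector_add_component sum_component vector_scaleR_component
    by (simp only: air bc cong: sum.cong)
  then show ?thesis
    by (simp add: vec_eq_iff sum.union_disjoint[OF finite_SAR finite_SBR receive_slots_disjoint])
qed

lemma distr_eff_noise:
  assumes "\<And>j. u j \<noteq> 0"
  shows "distr (noise_space S) borel (\<lambda>\<omega>. eff_noise S t u i (noise_of \<omega>)) = gauss_vec (Ntil S t u i)"
  unfolding noise_space_def eff_noise_eq_noise_gain Ntil_eq_sum_cmod_noise_gain[OF assms]
  using slots_in_block[of i] N0_pos
  by (intro distr_Re_lincomb_noise_of) (auto simp: finite_SAR finite_SBR)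

lemma received_sum_eq:
  assumes u: "\<And>j. u j \<noteq> 0"
  shows "(\<Sum>s\<in>SAR S i. yhat_air S t u i s) + (\<Sum>s\<in>SBR S i. yhat_bc S t u (src S i s) i s)
       = (\<Sum>j\<in>Nb S i. Wt S i j *\<^sub>R decomp S t (Amat S t *v u j))
         + decomp S t (eff_noise S t u i (\<lambda>s. noise S t s i))"
proof -
  let ?D = "\<lambda>j. Wt S i j *\<^sub>R decomp S t (Amat S t *v u j)"
  have air: "yhat_air S t u i s = (\<Sum>j\<in>NA S i s. ?D j)
      + decomp S t (Re_vec (complex_of_real (1 / sqrt (gam S t u i s)) *s noise S t s i))"
    if s: "s \<in> SAR S i" for s
    using gam_pos[OF u s] hc_nonzero AirComp_groupD(1)[OF s] by (intro yhat_air_eq) auto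
  have bc: "yhat_bc S t u (src S i s) i s = ?D (src S i s)
      + Wt S i (src S i s) *\<^sub>R decomp S t (Re_vec ((1 / (complex_of_real (sqrt (alp S t u (src S i s)))
           * hc S t (src S i s) i)) *s noise S t s i))"
    if s: "s \<in> SBR S i" for s
    using alp_pos[OF u broadcasterD(2)[OF s]] hc_nonzero[OF broadcasterD(1)[OF s]] by (rule yhat_bc_eq)
  show ?thesis
    by (simp add: air bc sum.distrib sum_Nb_by_slots eff_noise_def linear_add[OF linear_decomp]
        linear_sum[OF linear_decomp] linear_scale[OF linear_decomp] add_ac cong: sum.cong)
qed

lemma y_hat_eq:
  assumes u: "\<And>t j. uvec S t j \<noteq> 0"
  shows "y_hat S t i = (\<Sum>j\<in>Nb S i. Wt S i j *\<^sub>R theta_hat S t j)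
           + (\<Sum>\<tau><t. decomp S \<tau> (eff_noise S \<tau> (uvec S \<tau>) i (\<lambda>s. noise S \<tau> s i)))"
proof (induction t)
  case 0
  show ?case by (simp add: y_hat_def theta_hat_def)
next
  case (Suc t)
  show ?case
    by (simp add: y_hat_Suc add.assoc received_sum_eq u Suc theta_hat_Suc scaleR_add_right
        sum.distrib add_ac)
qed

theorem consensus_update_eq:
  assumes no_loop: "i \<notin> Nb S i" and mixing: "mixing_ok (Nb S) (Wt S)"
    and u: "\<And>t j. uvec S t j \<noteq> 0"
  shows "theta S (Suc t) i =
            theta_half S t i
            + zeta S t *\<^sub>R (\<Sum>j\<in>Nb S i \<union> {i}. Wt S i j *\<^sub>R (theta_hat S (Suc t) j - theta_hat S (Suc t) i))
            + zeta S t *\<^sub>R (\<Sum>\<tau>\<le>t. decomp S \<tau> (eff_noise S \<tau> (uvec S \<tau>) i (\<lambda>s. noise S \<tau> s i)))"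
proof -
  let ?th = "theta_hat S (Suc t)"
  have "(\<Sum>j\<in>Nb S i \<union> {i}. Wt S i j *\<^sub>R (?th j - ?th i)) = (\<Sum>j\<in>insert i (Nb S i). Wt S i j *\<^sub>R ?th j) - ?th i"
    unfolding Un_insert_right Un_empty_right
    by (rule sum_scaleR_diff_eq[OF _ mixing_row_sum_closed_nbhd[OF mixing]]) simp
  also have "\<dots> = Wt S i i *\<^sub>R ?th i + (\<Sum>j\<in>Nb S i. Wt S i j *\<^sub>R ?th j) - ?th i"
    using no_loop by simp
  finally have consensus: "(\<Sum>j\<in>Nb S i \<union> {i}. Wt S i j *\<^sub>R (?th j - ?th i))
      = Wt S i i *\<^sub>R ?th i + (\<Sum>j\<in>Nb S i. Wt S i j *\<^sub>R ?th j) - ?th i" .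
  show ?thesis
    unfolding theta_Suc y_hat_eq[OF u] consensus lessThan_Suc_atMost
    by (simp add: algebra_simps)
qed

end

theorem lemma5p1:
  fixes S :: "('v::finite, 'd::finite, 'm::finite) lsys"
  assumes graph: "conn_graph (Nb S)"
    and mixing: "mixing_ok (Nb S) (Wt S)"
    and coding: "coding_ok S"
    and sched: "schedule_ok S"
    and chan: "channel_ok S"
    and par: "params_ok S"
    and wd_u: "\<And>t j. uvec S t j \<noteq> 0"
    and wd_w: "\<And>j s i. s \<in> SAR S j \<Longrightarrow> i \<in> NA S j s \<Longrightarrow> Wt S j i \<noteq> 0"
  shows "(\<forall>t i. theta S (Suc t) i =
            theta_half S t i
            + zeta S t *\<^sub>R (\<Sum>j\<in>Nb S i \<union> {i}. Wt S i j *\<^sub>R (theta_hat S (Suc t) j - theta_hat S (Suc t) i))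
            + zeta S t *\<^sub>R (\<Sum>\<tau>\<le>t. decomp S \<tau> (eff_noise S \<tau> (uvec S \<tau>) i (\<lambda>s. noise S \<tau> s i))))
       \<and> (\<forall>t i (u :: 'v \<Rightarrow> real^'d). (\<forall>j. u j \<noteq> 0) \<longrightarrow>
            distr (noise_space S) borel (\<lambda>\<omega>. eff_noise S t u i (noise_of \<omega>)) = gauss_vec (Ntil S t u i))"
proof -
  interpret analog_consensus S
    by (rule analog_consensus.intro) (fact sched chan par wd_w)+
  have no_loop: "i \<notin> Nb S i" for i
    using graph unfolding conn_graph_def by blast
  show ?thesis
    using consensus_update_eq[OF no_loop mixing wd_u] distr_eff_noise by blast
qed

end
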